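(* Let $\tilde L$ be a minimum-size counterexample. For every $x\in\tilde L\setminus\{0_{\tilde L},1_{\tilde L}\}$, the set $({\parallel}x)=\{y\in\tilde L: y \text{ is incomparable with } x\}$ is not a chain; that is, there exist two elements of $\tilde L$ that are incomparable with each other and each incomparable with $x$.
   Context: For a poset $P$, $x$ upper covers $y$ if $y<x$ with nothing strictly between; join-irreducible: upper covers exactly one element. For $x\in P$, ${\uparrow}x=\{y: x\le y\}$. A chain is a totally ordered subset (the empty set and singletons count as chains). $0_{\tilde L}$, $1_{\tilde L}$ are the least and greatest elements. A counterexample is a finite lattice $L$ with $|L|>1$ in which every join-irreducible $j$ satisfies $|{\uparrow}j|>|L|/2$; a minimum-size counterexample is a counterexample $\tilde L$ such that no counterexample has fewer elements. *)

theory Defs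
  imports Complex_Main
begin

text \<open>A finite poset/lattice is represented by a carrier set A together with an order
relation le (only its values on A matter).\<close>

definition poset_on :: "'a set \<Rightarrow> ('a \<Rightarrow> 'a \<Rightarrow> bool) \<Rightarrow> bool" where
  "poset_on A le \<longleftrightarrow>
     (\<forall>x\<in>A. le x x) \<and>
     (\<forall>x\<in>A. \<forall>y\<in>A. le x y \<and> le y x \<longrightarrow> x = y) \<and>
     (\<forall>x\<in>A. \<forall>y\<in>A. \<forall>z\<in>A. le x y \<and> le y z \<longrightarrow> le x z)"

definition is_lub :: "'a set \<Rightarrow> ('a \<Rightarrow> 'a \<Rightarrow> bool) \<Rightarrow> 'a \<Rightarrow> 'a \<Rightarrow> 'a \<Rightarrow> bool" where
  "is_lub A le x y s \<longleftrightarrow> s \<in> A \<and> le x s \<and> le y s \<and>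
     (\<forall>u\<in>A. le x u \<and> le y u \<longrightarrow> le s u)"

definition is_glb :: "'a set \<Rightarrow> ('a \<Rightarrow> 'a \<Rightarrow> bool) \<Rightarrow> 'a \<Rightarrow> 'a \<Rightarrow> 'a \<Rightarrow> bool" where
  "is_glb A le x y s \<longleftrightarrow> s \<in> A \<and> le s x \<and> le s y \<and>
     (\<forall>u\<in>A. le u x \<and> le u y \<longrightarrow> le u s)"

definition lattice_on :: "'a set \<Rightarrow> ('a \<Rightarrow> 'a \<Rightarrow> bool) \<Rightarrow> bool" where
  "lattice_on A le \<longleftrightarrow> poset_on A le \<and>
     (\<forall>x\<in>A. \<forall>y\<in>A. (\<exists>s. is_lub A le x y s) \<and> (\<exists>i. is_glb A le x y i))"

definition upper_covers :: "'a set \<Rightarrow> ('a \<Rightarrow> 'a \<Rightarrow> bool) \<Rightarrow> 'a \<Rightarrow> 'a \<Rightarrow> bool" where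
  "upper_covers A le x y \<longleftrightarrow> x \<in> A \<and> y \<in> A \<and> le y x \<and> y \<noteq> x \<and>
     \<not> (\<exists>z\<in>A. le y z \<and> y \<noteq> z \<and> le z x \<and> z \<noteq> x)"

definition join_irreducible :: "'a set \<Rightarrow> ('a \<Rightarrow> 'a \<Rightarrow> bool) \<Rightarrow> 'a \<Rightarrow> bool" where
  "join_irreducible A le j \<longleftrightarrow> j \<in> A \<and> card {y. upper_covers A le j y} = 1"

definition up_set :: "'a set \<Rightarrow> ('a \<Rightarrow> 'a \<Rightarrow> bool) \<Rightarrow> 'a \<Rightarrow> 'a set" where
  "up_set A le x = {y \<in> A. le x y}"

definition counterexample :: "'a set \<Rightarrow> ('a \<Rightarrow> 'a \<Rightarrow> bool) \<Rightarrow> bool" where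
  "counterexample A le \<longleftrightarrow> finite A \<and> lattice_on A le \<and> card A > 1 \<and>
     (\<forall>j. join_irreducible A le j \<longrightarrow> real (card (up_set A le j)) > real (card A) / 2)"

text \<open>Minimality ranges over all lattices on carriers of the same type; since any smaller
finite lattice is isomorphic to one whose carrier lies in this type, this is equivalent to
minimality over all finite lattices.\<close>
definition min_counterexample :: "'a set \<Rightarrow> ('a \<Rightarrow> 'a \<Rightarrow> bool) \<Rightarrow> bool" where
  "min_counterexample A le \<longleftrightarrow> counterexample A le \<and>
     (\<forall>(B::'a set) le'. counterexample B le' \<longrightarrow> card A \<le> card B)"

definition least_elem :: "'a set \<Rightarrow> ('a \<Rightarrow> 'a \<Rightarrow> bool) \<Rightarrow> 'a \<Rightarrow> bool" where
  "least_elem A le x \<longleftrightarrow> x \<in> A \<and> (\<forall>z\<in>A. le x z)"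

definition greatest_elem :: "'a set \<Rightarrow> ('a \<Rightarrow> 'a \<Rightarrow> bool) \<Rightarrow> 'a \<Rightarrow> bool" where
  "greatest_elem A le x \<longleftrightarrow> x \<in> A \<and> (\<forall>z\<in>A. le z x)"

definition incomparable :: "('a \<Rightarrow> 'a \<Rightarrow> bool) \<Rightarrow> 'a \<Rightarrow> 'a \<Rightarrow> bool" where
  "incomparable le x y \<longleftrightarrow> \<not> le x y \<and> \<not> le y x"

end

theory Submission
  imports Defs
begin

text \<open>Suppose the elements incomparable with x form a chain. The filter of x is a smaller
lattice with at least two elements, so by minimality it has an element u, join-irreducible
there, whose filter has at most half its size. In the whole lattice u is not join-irreducible,
and the least incomparable element f below u but not below the lower cover of u inside the
filter is join-irreducible with join f x = u. Let g be the greatest join-irreducible element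
of the chain. Every element above g is either in the chain or above u, and meeting with x
embeds the chain part of the filter of g into the elements strictly below x: two chain
elements with the same meet would make the larger one join-irreducible. Counting the elements
below, incomparable with and above x then gives 2 |up g| \<le> |L|, so L is no counterexample.\<close>

definition incomparables :: "'a set \<Rightarrow> ('a \<Rightarrow> 'a \<Rightarrow> bool) \<Rightarrow> 'a \<Rightarrow> 'a set" where
  "incomparables A le x = {y \<in> A. incomparable le y x}"

locale carrier_poset =
  fixes A :: "'a set" and le :: "'a \<Rightarrow> 'a \<Rightarrow> bool" (infix "\<preceq>" 50)
  assumes poset: "poset_on A le"
begin

lemma refl: "a \<in> A \<Longrightarrow> a \<preceq> a"
  using poset unfolding poset_on_def by blast

lemma antisym: "\<lbrakk>a \<in> A; b \<in> A; a \<preceq> b; b \<preceq> a\<rbrakk> \<Longrightarrow> a = b"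
  using poset unfolding poset_on_def by blast

lemma trans: "\<lbrakk>a \<in> A; b \<in> A; c \<in> A; a \<preceq> b; b \<preceq> c\<rbrakk> \<Longrightarrow> a \<preceq> c"
  using poset unfolding poset_on_def by blast

lemma join_irreducibleI:
  assumes "j \<in> A" "m \<in> A" "m \<preceq> j" "m \<noteq> j"
    and below: "\<And>z. \<lbrakk>z \<in> A; z \<preceq> j; z \<noteq> j\<rbrakk> \<Longrightarrow> z \<preceq> m"
  shows "join_irreducible A le j"
proof -
  have "{c. upper_covers A le j c} = {m}"
  proof (intro set_eqI iffI)
    fix c assume "c \<in> {c. upper_covers A le j c}"
    then have c: "c \<in> A" "c \<preceq> j" "c \<noteq> j" "\<not> (\<exists>z\<in>A. c \<preceq> z \<and> c \<noteq> z \<and> z \<preceq> j \<and> z \<noteq> j)"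
      by (auto simp: upper_covers_def)
    have "c \<preceq> m" using below c by blast
    then have "c = m" using c assms(2-4) by blast
    then show "c \<in> {m}" by simp
  next
    fix c assume "c \<in> {m}"
    then have "c = m" by simp
    moreover have "\<not> (\<exists>z\<in>A. m \<preceq> z \<and> m \<noteq> z \<and> z \<preceq> j \<and> z \<noteq> j)"
      using below antisym assms(2) by blast
    ultimately show "c \<in> {c. upper_covers A le j c}"
      using assms(1-4) by (simp add: upper_covers_def)
  qed
  then show ?thesis
    using assms(1) by (simp add: join_irreducible_def)
qed

lemma second_lower_cover:
  assumes "upper_covers A le u c" "\<not> join_irreducible A le u"
  obtains w where "upper_covers A le u w" "\<not> w \<preceq> c"
proof -
  have "{c. upper_covers A le u c} \<noteq> {c}"
    using assms by (auto simp: join_irreducible_def upper_covers_def)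
  then obtain w where w: "upper_covers A le u w" "w \<noteq> c"
    using assms(1) by blast
  have "\<not> w \<preceq> c"
    using w assms(1) unfolding upper_covers_def by blast
  with w that show ?thesis by blast
qed

lemma upper_covers_up_set_iff:
  assumes "x \<in> A" "u \<in> up_set A le x" "x \<preceq> c"
  shows "upper_covers (up_set A le x) le u c \<longleftrightarrow> upper_covers A le u c"
  using assms by (auto simp: upper_covers_def up_set_def intro: trans[of x c])

lemma up_set_up_set:
  assumes "x \<in> A" "u \<in> up_set A le x"
  shows "up_set (up_set A le x) le u = up_set A le u"
  using assms by (auto simp: up_set_def intro: trans[of x u])

end

sublocale carrier_poset \<subseteq> dual: carrier_poset A "\<lambda>a b. b \<preceq> a"
  using poset by unfold_locales (unfold poset_on_def, blast)

locale finite_carrier_poset = carrier_poset +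
  assumes finite: "finite A"
begin

lemma finite_has_minimal:
  assumes "S \<subseteq> A" "S \<noteq> {}"
  shows "\<exists>m\<in>S. \<forall>z\<in>S. z \<preceq> m \<longrightarrow> z = m"
proof -
  define down where "down a = {y \<in> A. y \<preceq> a}" for a
  obtain m where "m \<in> S" and m_least: "\<And>z. z \<in> S \<Longrightarrow> card (down m) \<le> card (down z)"
    using assms(2) ex_has_least_nat[where P = "\<lambda>a. a \<in> S" and m = "\<lambda>a. card (down a)"] by blast
  have "z = m" if "z \<in> S" "z \<preceq> m" for z
  proof -
    have "down z \<subseteq> down m"
      using that \<open>m \<in> S\<close> assms(1) trans unfolding down_def by blast
    then have "down z = down m"
      using m_least[OF \<open>z \<in> S\<close>] finite by (intro card_seteq) (auto simp: down_def)
    then have "m \<preceq> z"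
      using \<open>m \<in> S\<close> assms(1) refl unfolding down_def by blast
    then show "z = m"
      using that \<open>m \<in> S\<close> assms(1) antisym by blast
  qed
  then show ?thesis
    using \<open>m \<in> S\<close> by blast
qed

lemma chain_has_least:
  assumes "S \<subseteq> A" "S \<noteq> {}" "\<And>a b. \<lbrakk>a \<in> S; b \<in> S\<rbrakk> \<Longrightarrow> a \<preceq> b \<or> b \<preceq> a"
  shows "\<exists>m\<in>S. \<forall>c\<in>S. m \<preceq> c"
proof -
  obtain m where "m \<in> S" and m_min: "\<forall>z\<in>S. z \<preceq> m \<longrightarrow> z = m"
    using finite_has_minimal[OF assms(1,2)] by blast
  have "m \<preceq> c" if "c \<in> S" for c
    using assms(3)[OF \<open>m \<in> S\<close> that] m_min that refl assms(1) by blast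
  with \<open>m \<in> S\<close> show ?thesis by blast
qed

end

sublocale finite_carrier_poset \<subseteq> dual: finite_carrier_poset A "\<lambda>a b. b \<preceq> a"
  using finite by unfold_locales

context finite_carrier_poset
begin

lemma chain_has_greatest:
  assumes "S \<subseteq> A" "S \<noteq> {}" "\<And>a b. \<lbrakk>a \<in> S; b \<in> S\<rbrakk> \<Longrightarrow> a \<preceq> b \<or> b \<preceq> a"
  shows "\<exists>m\<in>S. \<forall>c\<in>S. c \<preceq> m"
  using dual.chain_has_least[OF assms(1,2)] assms(3) by blast

lemma lower_cover_above:
  assumes "z \<in> A" "u \<in> A" "z \<preceq> u" "z \<noteq> u"
  shows "\<exists>c. upper_covers A le u c \<and> z \<preceq> c"
proof -
  define T where "T = {v \<in> A. z \<preceq> v \<and> v \<preceq> u \<and> v \<noteq> u}"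
  have "z \<in> T"
    using assms refl by (simp add: T_def)
  then obtain c where "c \<in> T" and c_max: "\<forall>v\<in>T. c \<preceq> v \<longrightarrow> v = c"
    using dual.finite_has_minimal[of T] by (auto simp: T_def)
  have "w = c" if "w \<in> A" "c \<preceq> w" "w \<preceq> u" "w \<noteq> u" for w
  proof -
    have "z \<preceq> w"
      using \<open>c \<in> T\<close> that assms(1) trans[of z c w] by (simp add: T_def)
    then show ?thesis
      using c_max that by (simp add: T_def)
  qed
  then have "upper_covers A le u c"
    using \<open>c \<in> T\<close> assms(2) unfolding upper_covers_def T_def by blast
  then show ?thesis
    using \<open>c \<in> T\<close> by (auto simp: T_def)
qed

lemma join_irreducible_lower_cover:
  assumes "join_irreducible A le u"
  obtains c where "upper_covers A le u c" "\<And>z. \<lbrakk>z \<in> A; z \<preceq> u; z \<noteq> u\<rbrakk> \<Longrightarrow> z \<preceq> c"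
proof -
  have "card {c. upper_covers A le u c} = 1"
    using assms by (simp add: join_irreducible_def)
  then obtain c where c: "{c. upper_covers A le u c} = {c}"
    by (rule card_1_singletonE)
  have "u \<in> A"
    using assms by (simp add: join_irreducible_def)
  have "z \<preceq> c" if z: "z \<in> A" "z \<preceq> u" "z \<noteq> u" for z
  proof -
    obtain c' where "upper_covers A le u c'" "z \<preceq> c'"
      using lower_cover_above[OF z(1) \<open>u \<in> A\<close> z(2,3)] by blast
    moreover from this(1) have "c' = c"
      using c by (metis mem_Collect_eq singletonD)
    ultimately show ?thesis by simp
  qed
  moreover have "upper_covers A le u c"
    using c by blast
  ultimately show ?thesis
    using that by blast
qed

end

locale carrier_lattice = carrier_poset +
  assumes bounds: "\<forall>a\<in>A. \<forall>b\<in>A. (\<exists>s. is_lub A le a b s) \<and> (\<exists>i. is_glb A le a b i)"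
begin

definition join :: "'a \<Rightarrow> 'a \<Rightarrow> 'a" where
  "join a b = (SOME s. is_lub A le a b s)"

definition meet :: "'a \<Rightarrow> 'a \<Rightarrow> 'a" where
  "meet a b = (SOME i. is_glb A le a b i)"

lemma is_lub_join: "\<lbrakk>a \<in> A; b \<in> A\<rbrakk> \<Longrightarrow> is_lub A le a b (join a b)"
  unfolding join_def using bounds by (blast intro: someI_ex)

lemma is_glb_meet: "\<lbrakk>a \<in> A; b \<in> A\<rbrakk> \<Longrightarrow> is_glb A le a b (meet a b)"
  unfolding meet_def using bounds by (blast intro: someI_ex)

lemma join_closed: "\<lbrakk>a \<in> A; b \<in> A\<rbrakk> \<Longrightarrow> join a b \<in> A"
  and join_upper1: "\<lbrakk>a \<in> A; b \<in> A\<rbrakk> \<Longrightarrow> a \<preceq> join a b"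
  and join_upper2: "\<lbrakk>a \<in> A; b \<in> A\<rbrakk> \<Longrightarrow> b \<preceq> join a b"
  and join_least: "\<lbrakk>a \<in> A; b \<in> A; u \<in> A; a \<preceq> u; b \<preceq> u\<rbrakk> \<Longrightarrow> join a b \<preceq> u"
  using is_lub_join[of a b] by (simp_all add: is_lub_def)

lemma meet_closed: "\<lbrakk>a \<in> A; b \<in> A\<rbrakk> \<Longrightarrow> meet a b \<in> A"
  and meet_lower1: "\<lbrakk>a \<in> A; b \<in> A\<rbrakk> \<Longrightarrow> meet a b \<preceq> a"
  and meet_lower2: "\<lbrakk>a \<in> A; b \<in> A\<rbrakk> \<Longrightarrow> meet a b \<preceq> b"
  and meet_greatest: "\<lbrakk>a \<in> A; b \<in> A; l \<in> A; l \<preceq> a; l \<preceq> b\<rbrakk> \<Longrightarrow> l \<preceq> meet a b"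
  using is_glb_meet[of a b] by (simp_all add: is_glb_def)

lemma lattice_on_up_set:
  assumes "x \<in> A"
  shows "lattice_on (up_set A le x) le"
proof -
  have sub: "up_set A le x \<subseteq> A"
    by (auto simp: up_set_def)
  have "poset_on (up_set A le x) le"
    using poset sub unfolding poset_on_def by blast
  moreover have "is_lub (up_set A le x) le a b (join a b)" "is_glb (up_set A le x) le a b (meet a b)"
    if "a \<in> up_set A le x" "b \<in> up_set A le x" for a b
  proof -
    have ab: "a \<in> A" "b \<in> A" "x \<preceq> a" "x \<preceq> b"
      using that by (auto simp: up_set_def)
    have "join a b \<in> up_set A le x"
      using ab assms join_closed join_upper1 trans[of x a "join a b"] by (simp add: up_set_def)
    then show "is_lub (up_set A le x) le a b (join a b)"
      using is_lub_join[OF ab(1,2)] sub by (auto simp: is_lub_def)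
    have "meet a b \<in> up_set A le x"
      using ab assms meet_closed meet_greatest by (simp add: up_set_def)
    then show "is_glb (up_set A le x) le a b (meet a b)"
      using is_glb_meet[OF ab(1,2)] sub by (auto simp: is_glb_def)
  qed
  ultimately show ?thesis
    unfolding lattice_on_def by blast
qed

end

locale finite_carrier_lattice = finite_carrier_poset + carrier_lattice

context carrier_lattice
begin

lemma join_irreducible_if_minimal_not_below:
  assumes "x \<in> A" "c \<in> A" "x \<preceq> c" "f \<in> incomparables A le x" "\<not> f \<preceq> c"
    and minimal: "\<And>d. \<lbrakk>d \<in> incomparables A le x; d \<preceq> f; \<not> d \<preceq> c\<rbrakk> \<Longrightarrow> d = f"
  shows "join_irreducible A le f"
proof -
  have f: "f \<in> A" "\<not> f \<preceq> x" "\<not> x \<preceq> f"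
    using assms(4) by (auto simp: incomparables_def incomparable_def)
  have below_c: "z \<preceq> c" if z: "z \<in> A" "z \<preceq> f" "z \<noteq> f" for z
  proof (cases "z \<preceq> x")
    case True
    then show ?thesis
      using trans[of z x c] z(1) assms(1-3) by blast
  next
    case False
    have "\<not> x \<preceq> z"
      using trans[of x z f] assms(1) z f by blast
    with False z have "z \<in> incomparables A le x"
      by (simp add: incomparables_def incomparable_def)
    then show ?thesis
      using minimal z by blast
  qed
  show ?thesis
  proof (rule join_irreducibleI)
    show "meet f c \<noteq> f"
      using meet_lower2[OF f(1) assms(2)] \<open>\<not> f \<preceq> c\<close> by auto
    show "z \<preceq> meet f c" if "z \<in> A" "z \<preceq> f" "z \<noteq> f" for z
      using meet_greatest[OF f(1) assms(2) that(1,2)] below_c[OF that] .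
  qed (use f(1) assms(2) meet_closed meet_lower1 in auto)
qed

lemma join_eq_if_unique_lower_cover:
  assumes "x \<in> A" "f \<in> A" "u \<in> A" "c \<in> A" "f \<preceq> u" "x \<preceq> u" "\<not> f \<preceq> c"
    and below: "\<And>z. \<lbrakk>z \<in> A; x \<preceq> z; z \<preceq> u; z \<noteq> u\<rbrakk> \<Longrightarrow> z \<preceq> c"
  shows "join f x = u"
proof (rule ccontr)
  assume "join f x \<noteq> u"
  moreover have "join f x \<in> A" "x \<preceq> join f x" "join f x \<preceq> u"
    using join_closed join_upper2 join_least assms(1-6) by simp_all
  ultimately have "join f x \<preceq> c"
    using below by blast
  then show False
    using trans[of f "join f x" c] join_closed join_upper1 assms(1,2,4,7) by blast
qed

end

context finite_carrier_lattice
begin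

lemma join_irreducible_incomparable_with_join:
  assumes x: "x \<in> A" and u: "join_irreducible (up_set A le x) le u" "\<not> join_irreducible A le u"
  obtains f where "f \<in> incomparables A le x" "join_irreducible A le f" "join f x = u"
proof -
  interpret Q: finite_carrier_poset "up_set A le x" le
    using lattice_on_up_set[OF x] finite
    by unfold_locales (auto simp: lattice_on_def up_set_def)
  have uA: "u \<in> A" and xu: "x \<preceq> u" and uQ: "u \<in> up_set A le x"
    using u(1) by (auto simp: join_irreducible_def up_set_def)
  obtain c where cQ: "upper_covers (up_set A le x) le u c"
    and below: "\<And>z. \<lbrakk>z \<in> up_set A le x; z \<preceq> u; z \<noteq> u\<rbrakk> \<Longrightarrow> z \<preceq> c"
    using Q.join_irreducible_lower_cover[OF u(1)] by blast
  have cA: "c \<in> A" and xc: "x \<preceq> c"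
    using cQ by (auto simp: upper_covers_def up_set_def)
  have cover: "upper_covers A le u c"
    using cQ upper_covers_up_set_iff[OF x uQ xc] by simp
  obtain w where w: "upper_covers A le u w" "\<not> w \<preceq> c"
    using second_lower_cover[OF cover u(2)] .
  have wA: "w \<in> A" and wu: "w \<preceq> u" "w \<noteq> u"
    using w(1) by (auto simp: upper_covers_def)
  have "\<not> x \<preceq> w"
    using below[of w] w(2) wA wu by (auto simp: up_set_def)
  moreover have "\<not> w \<preceq> x"
    using trans[of w x c] x wA cA xc w(2) by blast
  ultimately have wI: "w \<in> incomparables A le x"
    using wA by (simp add: incomparables_def incomparable_def)
  define S where "S = {d \<in> incomparables A le x. d \<preceq> u \<and> \<not> d \<preceq> c}"
  have "S \<subseteq> A" "S \<noteq> {}"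
    using wI wu w(2) by (auto simp: S_def incomparables_def)
  then obtain f where fS: "f \<in> S" and f_min: "\<forall>d\<in>S. d \<preceq> f \<longrightarrow> d = f"
    using finite_has_minimal by blast
  have fI: "f \<in> incomparables A le x" and fA: "f \<in> A" and fu: "f \<preceq> u" and fc: "\<not> f \<preceq> c"
    using fS by (auto simp: S_def incomparables_def)
  have "join_irreducible A le f"
  proof (rule join_irreducible_if_minimal_not_below[OF x cA xc fI fc])
    fix d assume "d \<in> incomparables A le x" "d \<preceq> f" "\<not> d \<preceq> c"
    moreover have "d \<preceq> u"
      using trans[of d f u] calculation(1,2) fA uA fu by (auto simp: incomparables_def)
    ultimately show "d = f"
      using f_min by (simp add: S_def)
  qed
  moreover have "join f x = u"
    using join_eq_if_unique_lower_cover[OF x fA uA cA fu xu fc] below by (simp add: up_set_def)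
  ultimately show ?thesis
    using that fI by blast
qed

end

lemma (in finite_carrier_lattice) card_up_set_bounds:
  assumes "x \<in> A" "\<not> least_elem A le x" "\<not> greatest_elem A le x"
  shows "1 < card (up_set A le x)" "card (up_set A le x) < card A"
proof -
  obtain z where z: "z \<in> A" "\<not> z \<preceq> x"
    using assms(1,3) by (auto simp: greatest_elem_def)
  have "{x, join x z} \<subseteq> up_set A le x"
    using assms(1) z join_closed join_upper1 refl by (auto simp: up_set_def)
  moreover have "join x z \<noteq> x"
    using join_upper2[OF assms(1) z(1)] z(2) by auto
  ultimately show "1 < card (up_set A le x)"
    using finite card_mono[of "up_set A le x" "{x, join x z}"] by (auto simp: up_set_def)
  obtain z' where "z' \<in> A" "\<not> x \<preceq> z'"
    using assms(1,2) by (auto simp: least_elem_def)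
  then have "up_set A le x \<subset> A"
    by (auto simp: up_set_def)
  then show "card (up_set A le x) < card A"
    using finite by (rule psubset_card_mono[rotated])
qed

lemma (in finite_carrier_poset) card_split_by_comparison:
  assumes "x \<in> A"
  shows "card A = card {y \<in> A. y \<preceq> x \<and> y \<noteq> x} + card (incomparables A le x) + card (up_set A le x)"
proof -
  define D where "D = {y \<in> A. y \<preceq> x \<and> y \<noteq> x}"
  have split: "A = (D \<union> incomparables A le x) \<union> up_set A le x"
    by (auto simp: D_def incomparables_def incomparable_def up_set_def)
  have "D \<inter> incomparables A le x = {}"
    by (auto simp: D_def incomparables_def incomparable_def)
  moreover have "(D \<union> incomparables A le x) \<inter> up_set A le x = {}"
    using antisym assms by (auto simp: D_def incomparables_def incomparable_def up_set_def)
  moreover have "finite D" "finite (incomparables A le x)" "finite (up_set A le x)"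
    using finite by (simp_all add: D_def incomparables_def up_set_def)
  ultimately have "card ((D \<union> incomparables A le x) \<union> up_set A le x)
      = card D + card (incomparables A le x) + card (up_set A le x)"
    by (simp add: card_Un_disjoint)
  with split show ?thesis
    unfolding D_def by simp
qed

context carrier_lattice
begin

lemma meet_incomparable_strictly_below:
  assumes "x \<in> A" "c \<in> incomparables A le x"
  shows "meet c x \<in> {y \<in> A. y \<preceq> x \<and> y \<noteq> x}"
proof -
  have "c \<in> A" "\<not> x \<preceq> c"
    using assms(2) by (auto simp: incomparables_def incomparable_def)
  then show ?thesis
    using assms(1) meet_closed meet_lower1 meet_lower2 by fastforce
qed

lemma up_set_subset_incomparables_Un:
  assumes "x \<in> A" "f \<in> A" "g \<in> incomparables A le x" "f \<preceq> g" "join f x = u"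
  shows "up_set A le g \<subseteq> (incomparables A le x \<inter> up_set A le g) \<union> up_set A le u"
proof
  fix y assume "y \<in> up_set A le g"
  then have y: "y \<in> A" "g \<preceq> y"
    by (auto simp: up_set_def)
  have g: "g \<in> A" "\<not> g \<preceq> x"
    using assms(3) by (auto simp: incomparables_def incomparable_def)
  show "y \<in> (incomparables A le x \<inter> up_set A le g) \<union> up_set A le u"
  proof (cases "x \<preceq> y")
    case True
    have "f \<preceq> y"
      using trans[of f g y] assms(2,4) g(1) y by blast
    then have "u \<preceq> y"
      using join_least[OF assms(2,1) y(1)] True assms(5) by blast
    then show ?thesis
      using y(1) by (simp add: up_set_def)
  next
    case False
    moreover have "\<not> y \<preceq> x"
      using trans[of g y x] g y assms(1) by blast
    ultimately show ?thesis
      using y by (simp add: incomparables_def incomparable_def up_set_def)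
  qed
qed

end

locale incomparables_chain = finite_carrier_lattice +
  fixes x
  assumes x_in_carrier: "x \<in> A"
    and chain: "\<lbrakk>a \<in> incomparables A le x; b \<in> incomparables A le x\<rbrakk> \<Longrightarrow> a \<preceq> b \<or> b \<preceq> a"
begin

lemma join_irreducible_if_meet_eq:
  assumes c1: "c1 \<in> incomparables A le x" and c2: "c2 \<in> incomparables A le x"
    and "c1 \<preceq> c2" "c1 \<noteq> c2" "meet c1 x = meet c2 x"
  shows "join_irreducible A le c2"
proof -
  have c1A: "c1 \<in> A" and c2A: "c2 \<in> A" and c2x: "\<not> x \<preceq> c2"
    using c1 c2 by (auto simp: incomparables_def incomparable_def)
  define P where "P = {z \<in> incomparables A le x. z \<preceq> c2 \<and> z \<noteq> c2}"
  have "P \<subseteq> A" "c1 \<in> P"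
    using c1 assms(3,4) by (auto simp: P_def incomparables_def)
  then obtain m where "m \<in> P" and m_max: "\<forall>z\<in>P. z \<preceq> m"
    using chain_has_greatest[of P] chain by (auto simp: P_def)
  \<comment> \<open>m is the only lower cover of c2: what lies below c2 and x is below meet c1 x.\<close>
  have mA: "m \<in> A" and m: "m \<preceq> c2" "m \<noteq> c2"
    using \<open>m \<in> P\<close> by (auto simp: P_def incomparables_def)
  show ?thesis
  proof (rule join_irreducibleI[OF c2A mA m])
    fix z assume z: "z \<in> A" "z \<preceq> c2" "z \<noteq> c2"
    show "z \<preceq> m"
    proof (cases "z \<preceq> x")
      case True
      then have "z \<preceq> meet c1 x"
        using meet_greatest[OF c2A x_in_carrier z(1) z(2)] assms(5) by simp
      then have "z \<preceq> c1"
        using trans[of z "meet c1 x" c1] meet_closed meet_lower1 c1A x_in_carrier z(1) by blast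
      then show ?thesis
        using trans[of z c1 m] c1A mA z(1) m_max \<open>c1 \<in> P\<close> by blast
    next
      case False
      moreover have "\<not> x \<preceq> z"
        using trans[of x z c2] x_in_carrier z c2A c2x by blast
      ultimately have "z \<in> P"
        using z by (simp add: P_def incomparables_def incomparable_def)
      then show ?thesis
        using m_max by blast
    qed
  qed
qed

lemma inj_on_meet_above_greatest_join_irreducible:
  assumes "g \<in> incomparables A le x"
    and greatest: "\<And>d. \<lbrakk>d \<in> incomparables A le x; join_irreducible A le d\<rbrakk> \<Longrightarrow> d \<preceq> g"
  shows "inj_on (\<lambda>c. meet c x) (incomparables A le x \<inter> up_set A le g)"
proof -
  have eq: "c1 = c2"
    if "c1 \<in> incomparables A le x" "c2 \<in> incomparables A le x" "g \<preceq> c1" "c1 \<preceq> c2"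
      "meet c1 x = meet c2 x" for c1 c2
  proof (rule ccontr)
    assume "c1 \<noteq> c2"
    then have "c2 \<preceq> g"
      using greatest join_irreducible_if_meet_eq that by blast
    moreover have "c1 \<in> A" "c2 \<in> A" "g \<in> A"
      using that assms(1) by (auto simp: incomparables_def)
    ultimately show False
      using \<open>c1 \<noteq> c2\<close> that(3,4) trans[of c2 g c1] antisym[of c1 c2] by blast
  qed
  show ?thesis
  proof (rule inj_onI)
    fix c1 c2
    assume "c1 \<in> incomparables A le x \<inter> up_set A le g" "c2 \<in> incomparables A le x \<inter> up_set A le g"
      and "meet c1 x = meet c2 x"
    then show "c1 = c2"
      using chain eq[of c1 c2] eq[of c2 c1] by (auto simp: up_set_def)
  qed
qed

lemma exists_join_irreducible_with_small_up_set:
  assumes "join_irreducible (up_set A le x) le u" "\<not> join_irreducible A le u"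
  obtains g where "join_irreducible A le g"
    "2 * card (up_set A le g) + card (up_set A le x) \<le> card A + 2 * card (up_set A le u)"
proof -
  let ?I = "incomparables A le x" and ?D = "{y \<in> A. y \<preceq> x \<and> y \<noteq> x}"
  obtain f where f: "f \<in> ?I" "join_irreducible A le f" "join f x = u"
    using join_irreducible_incomparable_with_join[OF x_in_carrier assms] .
  define J where "J = {d \<in> ?I. join_irreducible A le d}"
  have "J \<subseteq> A" "f \<in> J"
    using f by (auto simp: J_def incomparables_def)
  then obtain g where "g \<in> J" and g_greatest: "\<forall>d\<in>J. d \<preceq> g"
    using chain_has_greatest[of J] chain by (auto simp: J_def)
  have gI: "g \<in> ?I" and g: "join_irreducible A le g" and "f \<preceq> g"
    using \<open>g \<in> J\<close> g_greatest \<open>f \<in> J\<close> by (auto simp: J_def)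
  define G where "G = ?I \<inter> up_set A le g"
  have finite_sets: "finite G" "finite ?D" "finite (up_set A le u)"
    using finite by (simp_all add: G_def incomparables_def up_set_def)
  have "card (up_set A le g) \<le> card (G \<union> up_set A le u)"
    using up_set_subset_incomparables_Un[OF x_in_carrier _ gI \<open>f \<preceq> g\<close> f(3)] f(1) finite_sets
    by (intro card_mono) (auto simp: G_def incomparables_def)
  also have "\<dots> \<le> card G + card (up_set A le u)"
    by (rule card_Un_le)
  finally have up_g: "card (up_set A le g) \<le> card G + card (up_set A le u)" .
  have "card G \<le> card ?D"
    using inj_on_meet_above_greatest_join_irreducible[OF gI] g_greatest finite_sets(2)
      meet_incomparable_strictly_below[OF x_in_carrier]
    by (intro card_inj_on_le[of "\<lambda>c. meet c x"]) (auto simp: G_def J_def)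
  moreover have "card G \<le> card ?I"
    using finite by (intro card_mono) (auto simp: G_def incomparables_def)
  ultimately show ?thesis
    using that[OF g] up_g card_split_by_comparison[OF x_in_carrier] by linarith
qed

end

theorem theorem2p13:
  fixes L :: "'a set" and le :: "'a \<Rightarrow> 'a \<Rightarrow> bool" and x :: 'a
  assumes "min_counterexample L le"
    and "x \<in> L" and "\<not> least_elem L le x" and "\<not> greatest_elem L le x"
  shows "\<exists>y\<in>L. \<exists>z\<in>L. incomparable le y z \<and> incomparable le y x \<and> incomparable le z x"
proof (rule ccontr)
  assume no_pair: "\<not> ?thesis"
  have cex: "counterexample L le" and minimal: "\<And>(B :: 'a set) le'. counterexample B le' \<Longrightarrow> card L \<le> card B"
    using assms(1) by (auto simp: min_counterexample_def)
  have chain: "le a b \<or> le b a" if "a \<in> incomparables L le x" "b \<in> incomparables L le x" for a b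
    using no_pair that by (auto simp: incomparables_def incomparable_def)
  interpret incomparables_chain L le x
    using cex assms(2) chain unfolding counterexample_def lattice_on_def
    by unfold_locales blast+
  let ?Q = "up_set L le x"
  have "\<not> counterexample ?Q le"
    using minimal card_up_set_bounds(2)[OF assms(2-4)] by fastforce
  then obtain u where u: "join_irreducible ?Q le u" "\<not> real (card (up_set ?Q le u)) > real (card ?Q) / 2"
    using finite card_up_set_bounds(1)[OF assms(2-4)] lattice_on_up_set[OF assms(2)]
    by (auto simp: counterexample_def up_set_def)
  have small_u: "2 * card (up_set L le u) \<le> card ?Q"
    using u up_set_up_set[OF assms(2)] by (auto simp: join_irreducible_def)
  have large: "card L < 2 * card (up_set L le j)" if "join_irreducible L le j" for j
    using cex that by (auto simp: counterexample_def)
  have "\<not> join_irreducible L le u"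
    using large[of u] small_u card_up_set_bounds(2)[OF assms(2-4)] by linarith
  then obtain g where "join_irreducible L le g"
    "2 * card (up_set L le g) + card ?Q \<le> card L + 2 * card (up_set L le u)"
    using exists_join_irreducible_with_small_up_set[OF u(1)] by blast
  then show False
    using large[of g] small_u by linarith
qed

end
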